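(* Let $F$ be a field of characteristic $p>0$, $L$ a Lie algebra over $F$ and $A$ an associative enveloping algebra of $L$ (so $L\subseteq A^{(-)}$). Put $\tilde L=L\otimes_FE\subseteq\tilde A=A\otimes_FE$. If $a\in\tilde L$ is a sandwich of $\tilde L$, then $[a,b]^p=0$ in $\tilde A$ for every $b\in\tilde L$.
   Context: $A^{(-)}$ is $A$ with the commutator bracket $[x,y]=xy-yx$. $E$ is the commutative associative $F$-algebra without unit generated by $e_1,e_2,\dots$ with relations $e_i^2=0$; $\tilde A=A\otimes_FE$ and $\tilde L=L\otimes_FE$. An element $a$ of a Lie algebra $M$ is a sandwich if $\operatorname{ad}(a)^2=0$ and $\operatorname{ad}(a)\operatorname{ad}(c)\operatorname{ad}(a)=0$ for all $c\in M$, where $\operatorname{ad}(a):x\mapsto[x,a]$. *)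

theory Defs
  imports Complex_Main
begin

text \<open>The algebra E (commutative, associative, non-unital, generated by e_1, e_2, ...
  with e_i^2 = 0) has the F-basis e_S = prod of e_i over i in S, for S a finite nonempty set of
  indices, with e_S e_T = e_(S union T) if S, T are disjoint and 0 otherwise.
  Hence an element of a tensor product V (x)_F E is the same as a finitely supported
  function from finite nonempty index sets to V.\<close>

definition tensE :: "'a set \<Rightarrow> (nat set \<Rightarrow> 'a::zero) set" where
  "tensE V = {x. finite {S. x S \<noteq> 0} \<and> (\<forall>S. x S \<noteq> 0 \<longrightarrow> finite S \<and> S \<noteq> {})
                 \<and> (\<forall>S. x S \<in> V)}"

definition tmul :: "(nat set \<Rightarrow> 'a::semiring_0) \<Rightarrow> (nat set \<Rightarrow> 'a) \<Rightarrow> nat set \<Rightarrow> 'a" where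
  "tmul x y = (\<lambda>U. \<Sum>S\<in>Pow U. x S * y (U - S))"

definition tbr :: "(nat set \<Rightarrow> 'a::ring) \<Rightarrow> (nat set \<Rightarrow> 'a) \<Rightarrow> nat set \<Rightarrow> 'a" where
  "tbr x y = tmul x y - tmul y x"

text \<open>Positive powers x^n (n >= 1) in the (possibly non-unital) algebra A (x)_F E.\<close>
fun tpow :: "(nat set \<Rightarrow> 'a::semiring_0) \<Rightarrow> nat \<Rightarrow> nat set \<Rightarrow> 'a" where
  "tpow x 0 = (\<lambda>_. 0)"
| "tpow x (Suc 0) = x"
| "tpow x (Suc (Suc n)) = tmul (tpow x (Suc n)) x"

definition tsandwich :: "(nat set \<Rightarrow> 'a::ring) set \<Rightarrow> (nat set \<Rightarrow> 'a) \<Rightarrow> bool" where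
  "tsandwich M a \<longleftrightarrow>
     (\<forall>x\<in>M. tbr (tbr x a) a = (\<lambda>_. 0)) \<and>
     (\<forall>x\<in>M. \<forall>c\<in>M. tbr (tbr (tbr x a) c) a = (\<lambda>_. 0))"

inductive_set alg_gen :: "('f \<Rightarrow> 'a \<Rightarrow> 'a) \<Rightarrow> 'a::ring set \<Rightarrow> 'a set"
  for smult :: "'f \<Rightarrow> 'a \<Rightarrow> 'a" and X :: "'a set" where
  gen: "x \<in> X \<Longrightarrow> x \<in> alg_gen smult X"
| zero: "0 \<in> alg_gen smult X"
| add: "x \<in> alg_gen smult X \<Longrightarrow> y \<in> alg_gen smult X \<Longrightarrow> x + y \<in> alg_gen smult X"
| scale: "x \<in> alg_gen smult X \<Longrightarrow> smult c x \<in> alg_gen smult X"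
| mult: "x \<in> alg_gen smult X \<Longrightarrow> y \<in> alg_gen smult X \<Longrightarrow> x * y \<in> alg_gen smult X"

end

theory Submission
  imports Defs
begin

text \<open>Write b as the sum of its components b_T concentrated at the basis elements e_T of E,
  so that [a,b] is the sum of the [a,b_T]. Each [a,b_T] is a multiple of e_T, hence squares to
  zero. These summands commute pairwise: by the Jacobi identity
  [[x,a],[y,a]] = [[[x,a],y],a] - [[[x,a],a],y], and both terms vanish since a is a sandwich.
  For commuting s, v with v^2 = 0 one has (s + v)^p = s^p + p s^(p-1) v = s^p in characteristic p,
  so [a,b]^p = 0 by induction on the number of summands.\<close>

definition commutator :: "'a::ring \<Rightarrow> 'a \<Rightarrow> 'a" where
  "commutator x y = x * y - y * x"

lemma commutator_zero_left [simp]: "commutator 0 y = 0"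
  by (simp add: commutator_def)

lemma commutator_swap: "commutator y x = - commutator x y"
  by (simp add: commutator_def)

lemma sandwich_commutators_commute:
  fixes a x y :: "'a::ring"
  assumes "commutator (commutator x a) a = 0"
    and "commutator (commutator (commutator x a) y) a = 0"
  shows "commutator a x * commutator a y = commutator a y * commutator a x"
proof -
  have jacobi: "commutator u (commutator y a)
      = commutator (commutator u y) a - commutator (commutator u a) y" for u
    by (simp add: commutator_def algebra_simps)
  have "commutator (commutator x a) (commutator y a) = 0"
    using jacobi[of "commutator x a"] assms by simp
  then have "commutator x a * commutator y a = commutator y a * commutator x a"
    by (simp add: commutator_def)
  then show ?thesis
    by (simp add: commutator_swap[of a x] commutator_swap[of a y])
qed

text \<open>In a ring without unit, \<open>((*) s ^^ n) v\<close> stands for s^n v (and is v for n = 0);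
  likewise \<open>((*) s ^^ n) s\<close> stands for s^(n+1).\<close>

lemma funpow_mult_left_commute:
  fixes s v w :: "'a::ring"
  assumes "s * v = v * s"
  shows "v * ((*) s ^^ n) w = ((*) s ^^ n) (v * w)"
  by (induction n) (simp_all, metis assms mult.assoc)

lemma funpow_mult_left_zero: "((*) (s::'a::ring) ^^ n) 0 = 0"
  by (induction n) simp_all

lemma square_zero_binomial:
  fixes s v :: "'a::ring"
  assumes sv: "s * v = v * s" and vv: "v * v = 0"
  shows "((*) (s + v) ^^ n) (s + v) = ((*) s ^^ n) s + (\<Sum>_<Suc n. ((*) s ^^ n) v)"
proof (induction n)
  case 0
  then show ?case by simp
next
  case (Suc n)
  have "v * ((*) s ^^ n) s = ((*) s ^^ Suc n) v"
    by (simp add: funpow_mult_left_commute[OF sv] sv funpow_Suc_right del: funpow.simps)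
  moreover have "v * ((*) s ^^ n) v = 0"
    by (simp only: funpow_mult_left_commute[OF sv] vv funpow_mult_left_zero)
  ultimately show ?case
    using Suc by (simp add: distrib_left distrib_right sum_distrib_left add_ac)
qed

lemma pow_sum_commuting_square_zero:
  fixes v :: "'b \<Rightarrow> 'a::ring"
  assumes char: "\<And>x::'a. (\<Sum>_<Suc n. x) = 0" and "finite F"
    and "\<And>S T. S \<in> F \<Longrightarrow> T \<in> F \<Longrightarrow> v S * v T = v T * v S"
    and "\<And>T. T \<in> F \<Longrightarrow> v T * v T = 0"
  shows "((*) (sum v F) ^^ n) (sum v F) = 0"
  using assms(2-)
proof (induction F rule: finite_induct)
  case empty
  then show ?case by (simp only: sum.empty funpow_mult_left_zero)
next
  case (insert T F)
  have "sum v F * v T = v T * sum v F"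
    using insert.prems(1) by (auto simp: sum_distrib_left sum_distrib_right intro: sum.cong)
  then have "((*) (sum v F + v T) ^^ n) (sum v F + v T) = ((*) (sum v F) ^^ n) (sum v F)"
    using square_zero_binomial[of "sum v F" "v T" n] insert.prems(2) char
    by (simp del: sum.lessThan_Suc)
  then show ?case
    using insert by (simp add: add.commute)
qed

lemma sum_const_eq_zero_CHAR:
  fixes smult :: "'f::field \<Rightarrow> 'a::ab_group_add \<Rightarrow> 'a" and y :: 'a
  assumes "module smult"
  shows "(\<Sum>_<CHAR('f). y) = 0"
proof -
  have "(\<Sum>_<CHAR('f). y) = smult (of_nat CHAR('f)) y"
    using module.sum_constant_scale[OF assms, of y "{..<CHAR('f)}"] by simp
  then show ?thesis
    by (simp add: module.scale_zero_left[OF assms])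
qed

lemma tmul_assoc:
  fixes x y z :: "nat set \<Rightarrow> 'a::semiring_0"
  shows "tmul (tmul x y) z = tmul x (tmul y z)"
proof
  fix U :: "nat set"
  show "tmul (tmul x y) z U = tmul x (tmul y z) U"
  proof (cases "finite U")
    case False
    then show ?thesis by (simp add: tmul_def)
  next
    case True
    have "tmul (tmul x y) z U = (\<Sum>S\<in>Pow U. \<Sum>R\<in>Pow S. x R * y (S - R) * z (U - S))"
      by (simp add: tmul_def sum_distrib_right)
    also have "\<dots> = (\<Sum>(S,R)\<in>Sigma (Pow U) Pow. x R * y (S - R) * z (U - S))"
      using True by (subst sum.Sigma) (auto intro: finite_subset)
    also have "\<dots> = (\<Sum>(R,Q)\<in>Sigma (Pow U) (\<lambda>R. Pow (U - R)). x R * (y Q * z (U - R - Q)))"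
    proof (rule sum.reindex_bij_witness[where i="\<lambda>(R,Q). (R \<union> Q, R)" and j="\<lambda>(S,R). (R, S - R)"])
      fix w assume "w \<in> Sigma (Pow U) Pow"
      then obtain S R where "w = (S, R)" "R \<subseteq> S" "S \<subseteq> U" by auto
      moreover from this have "U - R - (S - R) = U - S" by blast
      ultimately show "(case (case w of (S, R) \<Rightarrow> (R, S - R)) of
          (R, Q) \<Rightarrow> x R * (y Q * z (U - R - Q))) = (case w of (S, R) \<Rightarrow> x R * y (S - R) * z (U - S))"
        by (simp add: mult.assoc)
    qed (clarsimp, blast)+
    also have "\<dots> = (\<Sum>R\<in>Pow U. \<Sum>Q\<in>Pow (U - R). x R * (y Q * z (U - R - Q)))"
      using True by (subst sum.Sigma) auto
    also have "\<dots> = tmul x (tmul y z) U"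
      by (simp add: tmul_def sum_distrib_left)
    finally show ?thesis .
  qed
qed

text \<open>A copy of the function type, so that it can carry the multiplication of A \<otimes> E instead of
  the pointwise one.\<close>

typedef 'a tensor = "UNIV :: (nat set \<Rightarrow> 'a) set"
  morphisms coeffs tensor
  by simp

setup_lifting type_definition_tensor

instantiation tensor :: (ring) ring
begin

lift_definition zero_tensor :: "'a tensor" is "\<lambda>_. 0" .
lift_definition plus_tensor :: "'a tensor \<Rightarrow> 'a tensor \<Rightarrow> 'a tensor" is "\<lambda>x y U. x U + y U" .
lift_definition minus_tensor :: "'a tensor \<Rightarrow> 'a tensor \<Rightarrow> 'a tensor" is "\<lambda>x y U. x U - y U" .
lift_definition uminus_tensor :: "'a tensor \<Rightarrow> 'a tensor" is "\<lambda>x U. - x U" .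
lift_definition times_tensor :: "'a tensor \<Rightarrow> 'a tensor \<Rightarrow> 'a tensor" is tmul .

instance
proof
  fix x y z :: "'a tensor"
  show "x + y + z = x + (y + z)" by transfer (simp add: add.assoc)
  show "x + y = y + x" by transfer (simp add: add.commute)
  show "0 + x = x" by transfer simp
  show "- x + x = 0" by transfer simp
  show "x - y = x + - y" by transfer simp
  show "x * y * z = x * (y * z)" by transfer (rule tmul_assoc)
  show "(x + y) * z = x * z + y * z"
    by transfer (simp add: tmul_def fun_eq_iff distrib_right sum.distrib)
  show "x * (y + z) = x * y + x * z"
    by transfer (simp add: tmul_def fun_eq_iff distrib_left sum.distrib)
qed

end

lemma coeffs_sum: "finite F \<Longrightarrow> coeffs (sum f F) S = (\<Sum>T\<in>F. coeffs (f T) S)"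
  by (induction F rule: finite_induct) (auto simp: zero_tensor.rep_eq plus_tensor.rep_eq)

lemma tensor_tbr: "tensor (tbr x y) = commutator (tensor x) (tensor y)"
proof -
  have "coeffs (commutator (tensor x) (tensor y)) = tbr x y"
    by (simp add: commutator_def tbr_def minus_tensor.rep_eq times_tensor.rep_eq tensor_inverse
        fun_eq_iff)
  then show ?thesis by (metis coeffs_inverse)
qed

lemma tpow_eq_coeffs_funpow:
  "tpow x (Suc n) = coeffs (((*) (tensor x) ^^ n) (tensor x))"
proof (induction n)
  case 0
  then show ?case by (simp add: tensor_inverse)
next
  case (Suc n)
  let ?X = "tensor x"
  have "((*) ?X ^^ n) ?X * ?X = ?X * ((*) ?X ^^ n) ?X"
    by (induction n) (simp_all add: mult.assoc)
  moreover have "coeffs (((*) ?X ^^ n) ?X * ?X) = tmul (coeffs (((*) ?X ^^ n) ?X)) x"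
    by (simp add: times_tensor.rep_eq tensor_inverse)
  ultimately have "tmul (coeffs (((*) ?X ^^ n) ?X)) x = coeffs (((*) ?X ^^ Suc n) ?X)"
    by simp
  then show ?case
    using Suc by simp
qed

lemma tensor_sum_const_eq_zero:
  fixes m :: nat
  assumes "\<And>y::'a::ring. (\<Sum>_<m. y) = 0"
  shows "(\<Sum>_<m. X :: 'a tensor) = 0"
proof -
  have "coeffs (\<Sum>_<m. X) S = (\<Sum>_<m. coeffs X S)" for S
    by (rule coeffs_sum) simp
  then have "coeffs (\<Sum>_<m. X) = coeffs 0"
    by (simp add: fun_eq_iff assms zero_tensor.rep_eq)
  then show ?thesis by (simp add: coeffs_inject)
qed

lemma tsandwich_commutators_commute:
  assumes "tsandwich M a" "x \<in> M" "y \<in> M"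
  shows "commutator (tensor a) (tensor x) * commutator (tensor a) (tensor y)
       = commutator (tensor a) (tensor y) * commutator (tensor a) (tensor x)"
proof (rule sandwich_commutators_commute)
  show "commutator (commutator (tensor x) (tensor a)) (tensor a) = 0"
    and "commutator (commutator (commutator (tensor x) (tensor a)) (tensor y)) (tensor a) = 0"
    using assms unfolding tsandwich_def by (metis tensor_tbr zero_tensor.abs_eq)+
qed

text \<open>x is a multiple of e_T, i.e. only basis elements e_S with T \<subseteq> S occur in x.\<close>

definition supported_above :: "nat set \<Rightarrow> (nat set \<Rightarrow> 'a::zero) \<Rightarrow> bool" where
  "supported_above T x \<longleftrightarrow> (\<forall>S. x S \<noteq> 0 \<longrightarrow> T \<subseteq> S)"

lemma supported_above_tmul_left:
  fixes x y :: "nat set \<Rightarrow> 'a::semiring_0"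
  assumes "supported_above T x"
  shows "supported_above T (tmul x y)"
  unfolding supported_above_def
proof (intro allI impI)
  fix S assume "tmul x y S \<noteq> 0"
  then obtain R where "R \<subseteq> S" "x R * y (S - R) \<noteq> 0"
    unfolding tmul_def by (meson PowD sum.not_neutral_contains_not_neutral)
  moreover from this have "x R \<noteq> 0" by auto
  ultimately show "T \<subseteq> S" using assms by (auto simp: supported_above_def)
qed

lemma supported_above_tmul_right:
  fixes x y :: "nat set \<Rightarrow> 'a::semiring_0"
  assumes "supported_above T y"
  shows "supported_above T (tmul x y)"
  unfolding supported_above_def
proof (intro allI impI)
  fix S assume "tmul x y S \<noteq> 0"
  then obtain R where "x R * y (S - R) \<noteq> 0"
    unfolding tmul_def by (meson sum.not_neutral_contains_not_neutral)
  then have "y (S - R) \<noteq> 0" by auto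
  then show "T \<subseteq> S" using assms by (auto simp: supported_above_def)
qed

lemma tmul_eq_zero_if_supported_above:
  fixes x y :: "nat set \<Rightarrow> 'a::semiring_0"
  assumes "T \<noteq> {}" "supported_above T x" "supported_above T y"
  shows "tmul x y = (\<lambda>_. 0)"
proof
  fix U
  have "x S * y (U - S) = 0" for S
  proof (rule ccontr)
    assume "x S * y (U - S) \<noteq> 0"
    then have "x S \<noteq> 0" "y (U - S) \<noteq> 0" by auto
    then have "T \<subseteq> S" "T \<subseteq> U - S" using assms(2,3) by (auto simp: supported_above_def)
    then show False using assms(1) by blast
  qed
  then show "tmul x y U = 0" by (simp add: tmul_def)
qed

lemma commutator_square_eq_zero_if_supported_above:
  fixes a x :: "nat set \<Rightarrow> 'a::ring"
  assumes "T \<noteq> {}" "supported_above T x"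
  shows "commutator (tensor a) (tensor x) * commutator (tensor a) (tensor x) = 0"
proof -
  have "supported_above T (tbr a x)"
    using supported_above_tmul_left[OF assms(2), of a] supported_above_tmul_right[OF assms(2), of a]
    unfolding supported_above_def tbr_def by (metis diff_self minus_apply)
  then have "tmul (tbr a x) (tbr a x) = (\<lambda>_. 0)"
    using assms(1) tmul_eq_zero_if_supported_above by blast
  then show ?thesis
    by (metis tensor_tbr times_tensor.abs_eq zero_tensor.abs_eq)
qed

definition tsingle :: "nat set \<Rightarrow> 'a \<Rightarrow> nat set \<Rightarrow> 'a::zero" where
  "tsingle T c = (\<lambda>S. if S = T then c else 0)"

lemma supported_above_tsingle: "supported_above T (tsingle T c)"
  by (simp add: supported_above_def tsingle_def)

lemma tsingle_in_tensE: "finite T \<Longrightarrow> T \<noteq> {} \<Longrightarrow> c \<in> V \<Longrightarrow> 0 \<in> V \<Longrightarrow> tsingle T c \<in> tensE V"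
  by (simp add: tensE_def tsingle_def)

lemma tensor_eq_sum_tsingle:
  assumes "finite {S. x S \<noteq> 0}"
  shows "tensor x = (\<Sum>T | x T \<noteq> 0. tensor (tsingle T (x T)))"
proof -
  have "coeffs (\<Sum>T | x T \<noteq> 0. tensor (tsingle T (x T))) = x"
    using assms by (simp add: fun_eq_iff coeffs_sum tensor_inverse tsingle_def sum.delta')
  then show ?thesis by (metis coeffs_inverse)
qed

text \<open>Besides the characteristic, the argument uses only that L is a subspace and that a is a
  sandwich.\<close>

theorem lemma22:
  fixes smult :: "'f::field \<Rightarrow> 'a::ring \<Rightarrow> 'a"
    and p :: nat
    and L :: "'a set"
    and a :: "nat set \<Rightarrow> 'a"
  assumes char: "CHAR('f) = p" and p_pos: "p > 0"
    and vs: "module smult"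
    and bilin: "\<And>c x y. smult c (x * y) = smult c x * y"
               "\<And>c x y. smult c (x * y) = x * smult c y"
    and L_sub: "module.subspace smult L"
    and L_lie: "\<And>x y. x \<in> L \<Longrightarrow> y \<in> L \<Longrightarrow> x * y - y * x \<in> L"
    and env: "alg_gen smult L = UNIV"
    and a_in: "a \<in> tensE L"
    and sw: "tsandwich (tensE L) a"
  shows "\<forall>b \<in> tensE L. tpow (tbr a b) p = (\<lambda>_. 0)"
proof
  fix b assume b: "b \<in> tensE L"
  obtain n where p: "p = Suc n" using p_pos not0_implies_Suc by blast
  define F where "F = {T. b T \<noteq> 0}"
  define v where "v T = commutator (tensor a) (tensor (tsingle T (b T)))" for T
  have finF: "finite F" and F_sets: "\<And>T. T \<in> F \<Longrightarrow> finite T \<and> T \<noteq> {}"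
    using b by (auto simp: F_def tensE_def)
  have single_L: "tsingle T (b T) \<in> tensE L" if "T \<in> F" for T
    using b F_sets[OF that] module.subspace_0[OF vs L_sub]
    by (intro tsingle_in_tensE) (auto simp: tensE_def)
  have "tensor (tbr a b) = sum v F"
    using tensor_eq_sum_tsingle[of b] finF
    by (simp add: F_def v_def tensor_tbr commutator_def sum_distrib_left sum_distrib_right
        sum_subtractf)
  moreover have "((*) (sum v F) ^^ n) (sum v F) = 0"
  proof (rule pow_sum_commuting_square_zero[OF _ finF])
    show "(\<Sum>_<Suc n. X) = 0" for X :: "'a tensor"
      using sum_const_eq_zero_CHAR[OF vs] char p by (intro tensor_sum_const_eq_zero) simp
    show "v S * v T = v T * v S" if "S \<in> F" "T \<in> F" for S T
      unfolding v_def using that by (intro tsandwich_commutators_commute[OF sw] single_L)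
    show "v T * v T = 0" if "T \<in> F" for T
      unfolding v_def
      using F_sets[OF that] supported_above_tsingle
      by (blast intro: commutator_square_eq_zero_if_supported_above)
  qed
  ultimately show "tpow (tbr a b) p = (\<lambda>_. 0)"
    by (simp add: p tpow_eq_coeffs_funpow tensor_inverse zero_tensor.rep_eq)
qed

end
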